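(* Let $f:2^V\to\mathbb{Z}_{\ge0}$ be a connectivity function, $W\subseteq V$, and suppose $(C,V\setminus C,\emptyset)$ is a minimum $W$-improvement. Then $f(C\cap W')\le f(W')$ for every $W'\subseteq W$. Moreover, if $f(C\cap W')=f(W')$, then $(C\cup W', (V\setminus C)\setminus W', \emptyset)$ is also a minimum $W$-improvement.
   Context: A connectivity function $f:2^V\to\mathbb{Z}_{\ge0}$ ($V$ finite) satisfies $f(\emptyset)=0$, $f(X)=f(V\setminus X)$, and $f(X\cup Y)+f(X\cap Y)\le f(X)+f(Y)$. For $W\subseteq V$, a $W$-improvement is a tripartition $(C_1,C_2,C_3)$ of $V$ (pairwise disjoint, possibly empty, union $V$) with $f(C_i)<f(W)/2$, $f(C_i\cap W)<f(W)$, $f(C_i\cap(V\setminus W))<f(W)$ for each $i$. Its width is $\max_i f(C_i)$, its sum-width is $\sum_i f(C_i)$, and its arity is the number of nonempty $C_i$. A $W$-improvement is minimum if it has minimum width among all $W$-improvements, subject to that minimum arity, and subject to those minimum sum-width. *)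

theory Defs
  imports Main
begin

definition connectivity_function :: "'a set \<Rightarrow> ('a set \<Rightarrow> nat) \<Rightarrow> bool" where
  "connectivity_function V f \<longleftrightarrow> finite V \<and> f {} = 0 \<and>
     (\<forall>X. X \<subseteq> V \<longrightarrow> f X = f (V - X)) \<and>
     (\<forall>X Y. X \<subseteq> V \<longrightarrow> Y \<subseteq> V \<longrightarrow> f (X \<union> Y) + f (X \<inter> Y) \<le> f X + f Y)"

definition tripartition :: "'a set \<Rightarrow> 'a set \<times> 'a set \<times> 'a set \<Rightarrow> bool" where
  "tripartition V T \<longleftrightarrow> (case T of (C1, C2, C3) \<Rightarrow>
     C1 \<inter> C2 = {} \<and> C1 \<inter> C3 = {} \<and> C2 \<inter> C3 = {} \<and> C1 \<union> C2 \<union> C3 = V)"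

definition good_part :: "'a set \<Rightarrow> ('a set \<Rightarrow> nat) \<Rightarrow> 'a set \<Rightarrow> 'a set \<Rightarrow> bool" where
  "good_part V f W C \<longleftrightarrow> 2 * f C < f W \<and> f (C \<inter> W) < f W \<and> f (C \<inter> (V - W)) < f W"

text \<open>f(C) < f(W)/2 is written as 2 * f(C) < f(W) (exact for integer values).\<close>
definition improvement :: "'a set \<Rightarrow> ('a set \<Rightarrow> nat) \<Rightarrow> 'a set \<Rightarrow> 'a set \<times> 'a set \<times> 'a set \<Rightarrow> bool" where
  "improvement V f W T \<longleftrightarrow> tripartition V T \<and> (case T of (C1, C2, C3) \<Rightarrow>
     good_part V f W C1 \<and> good_part V f W C2 \<and> good_part V f W C3)"

definition width :: "('a set \<Rightarrow> nat) \<Rightarrow> 'a set \<times> 'a set \<times> 'a set \<Rightarrow> nat" where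
  "width f T = (case T of (C1, C2, C3) \<Rightarrow> max (f C1) (max (f C2) (f C3)))"

definition sum_width :: "('a set \<Rightarrow> nat) \<Rightarrow> 'a set \<times> 'a set \<times> 'a set \<Rightarrow> nat" where
  "sum_width f T = (case T of (C1, C2, C3) \<Rightarrow> f C1 + f C2 + f C3)"

definition arity :: "'a set \<times> 'a set \<times> 'a set \<Rightarrow> nat" where
  "arity T = (case T of (C1, C2, C3) \<Rightarrow>
     (if C1 \<noteq> {} then 1 else 0) + (if C2 \<noteq> {} then 1 else 0) + (if C3 \<noteq> {} then 1 else 0))"

definition min_improvement :: "'a set \<Rightarrow> ('a set \<Rightarrow> nat) \<Rightarrow> 'a set \<Rightarrow> 'a set \<times> 'a set \<times> 'a set \<Rightarrow> bool" where
  "min_improvement V f W T \<longleftrightarrow> improvement V f W T \<and>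
     (\<forall>T'. improvement V f W T' \<longrightarrow> width f T \<le> width f T') \<and>
     (\<forall>T'. improvement V f W T' \<and> width f T' = width f T \<longrightarrow> arity T \<le> arity T') \<and>
     (\<forall>T'. improvement V f W T' \<and> width f T' = width f T \<and> arity T' = arity T
        \<longrightarrow> sum_width f T \<le> sum_width f T')"

end

theory Submission
  imports Defs
begin

text \<open>Uncrossing: if \<open>f W' \<le> f (C \<inter> W')\<close>, submodularity of \<open>C\<close> and \<open>C \<inter> W\<close> against \<open>W'\<close>,
  and of \<open>(V - C) \<inter> W\<close> against \<open>V - W'\<close>, shows that moving \<open>W'\<close> into \<open>C\<close> increases none of
  the quantities bounded in the definition of a \<open>W\<close>-improvement. A strict inequality would thus
  give an improvement of smaller width; equality preserves width, arity and sum-width, hence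
  minimality.\<close>

lemma connectivity_function_empty:
  "connectivity_function V f \<Longrightarrow> f {} = 0"
  unfolding connectivity_function_def by blast

lemma connectivity_function_complement:
  "connectivity_function V f \<Longrightarrow> X \<subseteq> V \<Longrightarrow> f (V - X) = f X"
  unfolding connectivity_function_def by metis

lemma connectivity_function_submodular:
  "connectivity_function V f \<Longrightarrow> X \<subseteq> V \<Longrightarrow> Y \<subseteq> V \<Longrightarrow> f (X \<union> Y) + f (X \<inter> Y) \<le> f X + f Y"
  unfolding connectivity_function_def by blast

lemma connectivity_function_union_le:
  assumes "connectivity_function V f" "A \<subseteq> V" "B \<subseteq> V" "f B \<le> f (A \<inter> B)"
  shows "f (A \<union> B) \<le> f A"
  using connectivity_function_submodular[OF assms(1-3)] assms(4) by linarith

lemma connectivity_function_inter_le: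
  assumes "connectivity_function V f" "A \<subseteq> V" "B \<subseteq> V" "f B \<le> f (A \<union> B)"
  shows "f (A \<inter> B) \<le> f A"
  using connectivity_function_submodular[OF assms(1-3)] assms(4) by linarith

lemma improvement_bipartition_iff:
  assumes "connectivity_function V f"
  shows "improvement V f W (A, V - A, {}) \<longleftrightarrow>
    A \<subseteq> V \<and> good_part V f W A \<and> good_part V f W (V - A)"
  using connectivity_function_empty[OF assms]
  unfolding improvement_def tripartition_def good_part_def by auto

lemma width_bipartition:
  "connectivity_function V f \<Longrightarrow> A \<subseteq> V \<Longrightarrow> width f (A, V - A, {}) = f A"
  by (simp add: width_def connectivity_function_empty connectivity_function_complement)

lemma sum_width_bipartition:
  "connectivity_function V f \<Longrightarrow> A \<subseteq> V \<Longrightarrow> sum_width f (A, V - A, {}) = 2 * f A"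
  by (simp add: sum_width_def connectivity_function_empty connectivity_function_complement)

text \<open>A part equal to \<open>V\<close> would contain all of \<open>W\<close>, violating \<open>f (C\<^sub>i \<inter> W) < f W\<close>.\<close>

lemma improvement_arity_ge_2:
  assumes "improvement V f W T" "W \<subseteq> V"
  shows "2 \<le> arity T"
proof (rule ccontr)
  assume "\<not> 2 \<le> arity T"
  then obtain C where "C \<in> {fst T, fst (snd T), snd (snd T)}" "C = V"
    using assms(1) unfolding improvement_def tripartition_def arity_def
    by (auto split: prod.splits if_splits)
  then have "good_part V f W V"
    using assms(1) unfolding improvement_def by (auto split: prod.splits)
  with assms(2) show False
    unfolding good_part_def by (simp add: Int_absorb1)
qed

lemma arity_bipartition:
  assumes "improvement V f W (A, B, {})" "W \<subseteq> V"
  shows "arity (A, B, {}) = 2"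
  using improvement_arity_ge_2[OF assms] by (simp add: arity_def split: if_splits)

lemma min_improvement_width_le:
  "min_improvement V f W T \<Longrightarrow> improvement V f W T' \<Longrightarrow> width f T \<le> width f T'"
  unfolding min_improvement_def by blast

lemma min_improvement_if_measures_eq:
  assumes "min_improvement V f W T" "improvement V f W T'"
    and "width f T' = width f T" "arity T' = arity T" "sum_width f T' = sum_width f T"
  shows "min_improvement V f W T'"
  using assms unfolding min_improvement_def by metis

lemma improvement_bipartition_union:
  assumes cf: "connectivity_function V f" and "W \<subseteq> V"
    and imp: "improvement V f W (C, V - C, {})"
    and "W' \<subseteq> W" and le: "f W' \<le> f (C \<inter> W')"
  shows "improvement V f W (C \<union> W', V - (C \<union> W'), {})"
proof -
  have CV: "C \<subseteq> V" and W'V: "W' \<subseteq> V"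
    using imp \<open>W \<subseteq> V\<close> \<open>W' \<subseteq> W\<close> by (auto simp: improvement_bipartition_iff[OF cf])
  have good_C: "good_part V f W C" and good_VC: "good_part V f W (V - C)"
    using imp by (simp_all add: improvement_bipartition_iff[OF cf])
  have union: "f (C \<union> W') \<le> f C"
    using connectivity_function_union_le[OF cf CV W'V le] .
  have "C \<inter> W \<subseteq> V" "C \<inter> W \<inter> W' = C \<inter> W'"
    using CV \<open>W' \<subseteq> W\<close> by blast+
  then have "f ((C \<inter> W) \<union> W') \<le> f (C \<inter> W)"
    using connectivity_function_union_le[OF cf _ W'V] le by simp
  moreover have "(C \<union> W') \<inter> W = (C \<inter> W) \<union> W'"
    using \<open>W' \<subseteq> W\<close> by auto
  moreover have "(C \<union> W') \<inter> (V - W) = C \<inter> (V - W)"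
    using \<open>W' \<subseteq> W\<close> by auto
  ultimately have good_CW': "good_part V f W (C \<union> W')"
    using good_C union unfolding good_part_def by auto
  have "(V - C) \<inter> W \<union> (V - W') = V - (C \<inter> W')"
    using \<open>W' \<subseteq> W\<close> \<open>W \<subseteq> V\<close> by auto
  moreover have "f (V - (C \<inter> W')) = f (C \<inter> W')" "f (V - W') = f W'"
    using connectivity_function_complement[OF cf, of "C \<inter> W'"]
      connectivity_function_complement[OF cf W'V] CV by auto
  ultimately have "f ((V - C) \<inter> W \<inter> (V - W')) \<le> f ((V - C) \<inter> W)"
    using connectivity_function_inter_le[OF cf, of "(V - C) \<inter> W" "V - W'"] le by auto
  moreover have "(V - C) \<inter> W \<inter> (V - W') = (V - (C \<union> W')) \<inter> W"
    by auto
  moreover have "(V - (C \<union> W')) \<inter> (V - W) = (V - C) \<inter> (V - W)"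
    using \<open>W' \<subseteq> W\<close> by auto
  moreover have "f (V - (C \<union> W')) = f (C \<union> W')"
    using CV W'V by (simp add: connectivity_function_complement[OF cf])
  ultimately have "good_part V f W (V - (C \<union> W'))"
    using good_C good_VC union unfolding good_part_def by auto
  with good_CW' CV W'V show ?thesis
    by (simp add: improvement_bipartition_iff[OF cf])
qed

lemma min_improvement_bipartition_union_ge:
  assumes cf: "connectivity_function V f" and "W \<subseteq> V"
    and min: "min_improvement V f W (C, V - C, {})"
    and "W' \<subseteq> W" and "f W' \<le> f (C \<inter> W')"
  shows "f C \<le> f (C \<union> W')"
proof -
  have imp: "improvement V f W (C, V - C, {})"
    using min by (simp add: min_improvement_def)
  then have "C \<subseteq> V" "C \<union> W' \<subseteq> V"
    using \<open>W \<subseteq> V\<close> \<open>W' \<subseteq> W\<close> by (auto simp: improvement_bipartition_iff[OF cf])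
  then show ?thesis
    using min_improvement_width_le[OF min improvement_bipartition_union[OF assms(1,2) imp assms(4,5)]]
    by (simp add: width_bipartition[OF cf])
qed

lemma min_improvement_bipartition_inter_le:
  assumes cf: "connectivity_function V f" and "W \<subseteq> V"
    and min: "min_improvement V f W (C, V - C, {})" and "W' \<subseteq> W"
  shows "f (C \<inter> W') \<le> f W'"
proof (rule ccontr)
  assume "\<not> f (C \<inter> W') \<le> f W'"
  then have less: "f W' < f (C \<inter> W')"
    by simp
  have "C \<subseteq> V" "W' \<subseteq> V"
    using min \<open>W \<subseteq> V\<close> \<open>W' \<subseteq> W\<close>
    by (auto simp: min_improvement_def improvement_bipartition_iff[OF cf])
  then have "f (C \<union> W') + f (C \<inter> W') \<le> f C + f W'"
    by (rule connectivity_function_submodular[OF cf])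
  with less min_improvement_bipartition_union_ge[OF assms less_imp_le[OF less]] show False
    by linarith
qed

lemma min_improvement_bipartition_union:
  assumes cf: "connectivity_function V f" and "W \<subseteq> V"
    and min: "min_improvement V f W (C, V - C, {})"
    and "W' \<subseteq> W" and eq: "f (C \<inter> W') = f W'"
  shows "min_improvement V f W (C \<union> W', V - (C \<union> W'), {})"
proof -
  have imp: "improvement V f W (C, V - C, {})"
    using min by (simp add: min_improvement_def)
  then have CV: "C \<subseteq> V" and "W' \<subseteq> V" "C \<union> W' \<subseteq> V"
    using \<open>W \<subseteq> V\<close> \<open>W' \<subseteq> W\<close> by (auto simp: improvement_bipartition_iff[OF cf])
  have le: "f W' \<le> f (C \<inter> W')"
    using eq by simp
  have "f (C \<union> W') \<le> f C"
    using connectivity_function_union_le[OF cf CV \<open>W' \<subseteq> V\<close> le] .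
  with min_improvement_bipartition_union_ge[OF assms(1-4) le] have same: "f (C \<union> W') = f C"
    by simp
  have imp': "improvement V f W (C \<union> W', V - (C \<union> W'), {})"
    using improvement_bipartition_union[OF assms(1,2) imp assms(4) le] .
  show ?thesis
  proof (rule min_improvement_if_measures_eq[OF min imp'])
    show "width f (C \<union> W', V - (C \<union> W'), {}) = width f (C, V - C, {})"
      using same \<open>C \<union> W' \<subseteq> V\<close> CV by (simp add: width_bipartition[OF cf])
    show "sum_width f (C \<union> W', V - (C \<union> W'), {}) = sum_width f (C, V - C, {})"
      using same \<open>C \<union> W' \<subseteq> V\<close> CV by (simp add: sum_width_bipartition[OF cf])
    show "arity (C \<union> W', V - (C \<union> W'), {}) = arity (C, V - C, {})"
      using arity_bipartition[OF imp' \<open>W \<subseteq> V\<close>] arity_bipartition[OF imp \<open>W \<subseteq> V\<close>] by simp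
  qed
qed

theorem lemma6:
  fixes V W C :: "'a set" and f :: "'a set \<Rightarrow> nat"
  assumes "connectivity_function V f"
    and "W \<subseteq> V"
    and "min_improvement V f W (C, V - C, {})"
  shows "(\<forall>W'. W' \<subseteq> W \<longrightarrow> f (C \<inter> W') \<le> f W') \<and>
         (\<forall>W'. W' \<subseteq> W \<longrightarrow> f (C \<inter> W') = f W' \<longrightarrow>
            min_improvement V f W (C \<union> W', (V - C) - W', {}))"
proof -
  have "V - C - W' = V - (C \<union> W')" for W'
    by blast
  then show ?thesis
    using min_improvement_bipartition_inter_le[OF assms]
      min_improvement_bipartition_union[OF assms] by simp
qed

end
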